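(* In the Popularity Adjusted Block Model described in the context, suppose $\operatorname{rank}(\boldsymbol\Theta)=K^2$ and let $\boldsymbol\Xi\in\mathbb R^{n\times K^2}$ be a matrix of orthonormal eigenvectors of $\boldsymbol\Theta$ for its $K^2$ nonzero eigenvalues, with rows $\boldsymbol\xi_{i\cdot}$. Let $\tau_{ij}=|\cos(\boldsymbol\xi_{i\cdot},\boldsymbol\xi_{j\cdot})|$. Then for $i,j\in[n]$ (with $\boldsymbol\xi_{i\cdot},\boldsymbol\xi_{j\cdot}\neq0$), $$\tau_{ij}=\begin{cases}\left|\dfrac{D_{\boldsymbol P_{\boldsymbol c^\ast(i)}}(\boldsymbol\lambda_{i\cdot},\boldsymbol\lambda_{j\cdot})}{D^{1/2}_{\boldsymbol P_{\boldsymbol c^\ast(i)}}(\boldsymbol\lambda_{i\cdot},\boldsymbol\lambda_{i\cdot})\,D^{1/2}_{\boldsymbol P_{\boldsymbol c^\ast(i)}}(\boldsymbol\lambda_{j\cdot},\boldsymbol\lambda_{j\cdot})}\right|, & \boldsymbol c^\ast(i)=\boldsymbol c^\ast(j),\\[2mm] 0, & \boldsymbol c^\ast(i)\ne\boldsymbol c^\ast(j).\end{cases}$$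
   Context: Notation: $[m]=\{1,\dots,m\}$. Popularity Adjusted Block Model: integers $n$, $K\ge2$, a label vector $\boldsymbol c^\ast\in[K]^n$, a popularity matrix $\boldsymbol\Lambda=(\lambda_{ik})\in[0,1]^{n\times K}$ with rows $\boldsymbol\lambda_{i\cdot}\in\mathbb R^K$. The edge probability matrix is $\boldsymbol\Theta=(\theta_{ij})_{n\times n}$, $\theta_{ij}=\lambda_{i\boldsymbol c^\ast(j)}\lambda_{j\boldsymbol c^\ast(i)}$. For $k\in[K]$, $\boldsymbol\Lambda^{(k,\cdot)}$ is the submatrix of $\boldsymbol\Lambda$ consisting of the rows $i$ with $\boldsymbol c^\ast(i)=k$, $\boldsymbol P_k=(\boldsymbol\Lambda^{(k,\cdot)\top}\boldsymbol\Lambda^{(k,\cdot)})^{-1}$, and $D_{\boldsymbol P_k}(\boldsymbol x,\boldsymbol y)=\boldsymbol x^\top\boldsymbol P_k\boldsymbol y$ for $\boldsymbol x,\boldsymbol y\in\mathbb R^K$. $\cos(\boldsymbol x,\boldsymbol y)=\boldsymbol x^\top\boldsymbol y/(\|\boldsymbol x\|\|\boldsymbol y\|)$. *)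

theory Defs
  imports "HOL-Analysis.Analysis"
begin

text \<open>Nodes are indexed by a finite type 'n,
 communities by a finite type 'k (so K = CARD('k)).\<close>

definition pabm_theta :: "real^'k^'n \<Rightarrow> ('n \<Rightarrow> 'k) \<Rightarrow> real^'n^'n" where
  "pabm_theta Lam c = (\<chi> i j. Lam $ i $ (c j) * Lam $ j $ (c i))"

definition block_gram :: "real^'k^'n \<Rightarrow> ('n \<Rightarrow> 'k) \<Rightarrow> 'k \<Rightarrow> real^'k^'k" where
  "block_gram Lam c k = (\<chi> a b. \<Sum>i\<in>{i. c i = k}. Lam $ i $ a * Lam $ i $ b)"

definition pabm_P :: "real^'k^'n \<Rightarrow> ('n \<Rightarrow> 'k) \<Rightarrow> 'k \<Rightarrow> real^'k^'k" where
  "pabm_P Lam c k = matrix_inv (block_gram Lam c k)"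

definition D_form :: "real^'k^'k \<Rightarrow> real^'k \<Rightarrow> real^'k \<Rightarrow> real" where
  "D_form P x y = x \<bullet> (P *v y)"

definition cos_sim :: "real^'m \<Rightarrow> real^'m \<Rightarrow> real" where
  "cos_sim x y = (x \<bullet> y) / (norm x * norm y)"

end

theory Submission
  imports Defs
begin

text \<open>Every column of \<Theta> is a combination of the K^2 vectors v_kl, the l-th column of
  \<Lambda> restricted to the rows of community k. The K^2 orthonormal eigenvectors for nonzero
  eigenvalues lie in their span, so the v_kl are linearly independent and span the same space;
  in particular every Gram matrix P_k^-1 is invertible. Hence \<Xi> \<Xi>^T is the orthogonal
  projection onto that space, and \<xi>_a \<bullet> \<xi>_b is the a-th entry of the projection of the
  unit vector e_b. That projection lies in the span of the v_(c b) l, and solving the normal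
  equations gives \<xi>_a \<bullet> \<xi>_b = [c a = c b] \<lambda>_a^T P_(c b) \<lambda>_b.\<close>

definition block_column :: "real^'k^'n \<Rightarrow> ('n \<Rightarrow> 'k) \<Rightarrow> 'k \<Rightarrow> 'k \<Rightarrow> real^'n" where
  "block_column Lam c k l = (\<chi> i. if c i = k then Lam $ i $ l else 0)"

text \<open>The coefficients solve the normal equations G y = \<lambda>_b with G = block_gram Lam c (c b).\<close>

definition community_projection :: "real^'k^'n \<Rightarrow> ('n \<Rightarrow> 'k) \<Rightarrow> 'n \<Rightarrow> real^'n" where
  "community_projection Lam c b =
     (\<Sum>l\<in>UNIV. (pabm_P Lam c (c b) *v Lam $ b) $ l *\<^sub>R block_column Lam c (c b) l)"

lemma matrix_inv_right:
  fixes A :: "'a::semiring_1^'n^'m"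
  assumes "invertible A"
  shows "A ** matrix_inv A = mat 1"
  using assms unfolding invertible_def matrix_inv_def by (rule someI2_ex) simp

lemma independent_range_coefficients_zero:
  fixes f :: "'a::finite \<Rightarrow> 'b::euclidean_space"
  assumes indep: "independent (range f)" and "inj f" and zero: "(\<Sum>a\<in>UNIV. x a *\<^sub>R f a) = 0"
  shows "x a = 0"
proof -
  have sum_zero: "(\<Sum>v\<in>range f. x (inv f v) *\<^sub>R v) = 0"
    using \<open>inj f\<close> zero by (simp add: sum.reindex)
  have "\<forall>u. (\<Sum>v\<in>range f. u v *\<^sub>R v) = 0 \<longrightarrow> (\<forall>v\<in>range f. u v = 0)"
    using indep unfolding independent_explicit by blast
  from this[rule_format, of "\<lambda>v. x (inv f v)", OF sum_zero]
  have "x (inv f (f a)) = 0"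
    by blast
  then show ?thesis using \<open>inj f\<close> by simp
qed

lemma spanning_set_independent_of_card_le:
  fixes V X :: "'a::euclidean_space set"
  assumes "finite V" "independent X" "X \<subseteq> span V" "card V \<le> card X"
  shows "independent V" and "span X = span V" and "card V = card X"
proof -
  have "dim (span V) \<le> card V"
    using \<open>finite V\<close> by (intro dim_le_card) auto
  moreover have dim_X: "dim (span X) = card X"
    using \<open>independent X\<close> by (rule dim_span_eq_card_independent)
  moreover have span_sub: "span X \<subseteq> span V"
    using \<open>X \<subseteq> span V\<close> by (metis span_mono span_span)
  then have "dim (span X) \<le> dim (span V)"
    by (rule dim_subset)
  ultimately have dim_V: "dim (span V) = card V" "card V = card X"
    using \<open>card V \<le> card X\<close> by linarith+
  then show "card V = card X" by simp
  show "independent V"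
    using \<open>finite V\<close> dim_V by (intro card_le_dim_spanning[of V "span V"]) (auto intro: span_base)
  show "span X = span V"
    using span_sub dim_X dim_V by (intro subspace_dim_equal) auto
qed

lemma inner_columns_orthonormal:
  fixes Q :: "real^'m^'n"
  assumes "transpose Q ** Q = mat 1"
  shows "column a Q \<bullet> column b Q = (if a = b then 1 else 0)"
proof -
  have "column a Q \<bullet> column b Q = (transpose Q ** Q) $ a $ b"
    by (simp add: inner_vec_def matrix_matrix_mult_def transpose_def column_def)
  then show ?thesis using assms by (simp add: mat_def)
qed

lemma orthonormal_columns_independent:
  fixes Q :: "real^'m^'n"
  assumes "transpose Q ** Q = mat 1"
  shows "independent (range (\<lambda>l. column l Q))"
    and "card (range (\<lambda>l. column l Q)) = CARD('m)"
proof -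
  note inner = inner_columns_orthonormal[OF assms]
  have "inj (\<lambda>l. column l Q)"
    by (rule injI) (metis inner zero_neq_one)
  then show "card (range (\<lambda>l. column l Q)) = CARD('m)"
    by (simp add: card_image)
  have "column l Q \<noteq> 0" for l
    using inner[of l l] by auto
  then show "independent (range (\<lambda>l. column l Q))"
    by (intro pairwise_orthogonal_independent) (auto simp: pairwise_def orthogonal_def inner)
qed

lemma orthonormal_columns_project_span:
  fixes Q :: "real^'m^'n"
  assumes "transpose Q ** Q = mat 1" and "w \<in> span (range (\<lambda>l. column l Q))"
  shows "Q *v (transpose Q *v w) = w"
  using assms(2)
proof (induction rule: span_induct)
  case base
  then show ?case unfolding subspace_def
    by (simp add: matrix_vector_right_distrib matrix_vector_mult_scaleR del: transpose_matrix_vector)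
next
  case (step x)
  then obtain l where "x = Q *v axis l 1"
    by (auto simp: matrix_vector_mult_basis)
  then show ?case
    by (simp only: matrix_vector_mul_assoc assms(1) matrix_vector_mul_lid)
qed

lemma inner_rows_orthonormal_columns:
  fixes Q :: "real^'m^'n"
  assumes orth: "transpose Q ** Q = mat 1"
    and span_eq: "span (range (\<lambda>l. column l Q)) = span S"
    and p: "p \<in> span S"
    and perp: "\<And>s. s \<in> S \<Longrightarrow> s \<bullet> (axis b 1 - p) = 0"
  shows "Q $ a \<bullet> Q $ b = p $ a"
proof -
  have "column l Q \<bullet> (axis b 1 - p) = 0" for l
  proof -
    have "column l Q \<in> span S"
      using span_eq by (metis rangeI span_base)
    then show ?thesis
      using orthogonal_to_span[of "column l Q" S "axis b 1 - p"] perp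
      by (simp add: orthogonal_def inner_commute)
  qed
  then have "transpose Q *v (axis b 1 - p) = 0"
    by (simp add: vec_eq_iff matrix_vector_mul_component transpose_def column_def
        del: transpose_matrix_vector)
  then have "transpose Q *v axis b 1 = transpose Q *v p"
    by (simp add: matrix_vector_mult_diff_distrib del: transpose_matrix_vector)
  then have "Q *v (transpose Q *v axis b 1) = p"
    using orthonormal_columns_project_span[OF orth] p span_eq by simp
  moreover have "transpose Q *v axis b 1 = Q $ b"
    by (simp add: matrix_vector_mult_basis column_transpose row_def)
  ultimately show ?thesis
    by (metis matrix_vector_mul_component)
qed

lemma column_pabm_theta:
  "column j (pabm_theta Lam c) = (\<Sum>k\<in>UNIV. Lam $ j $ k *\<^sub>R block_column Lam c k (c j))"
proof -
  have "(\<Sum>k\<in>UNIV. Lam $ j $ k * (if c i = k then Lam $ i $ c j else 0)) = Lam $ i $ c j * Lam $ j $ c i"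
    for i
    by (simp add: if_distrib[where f="\<lambda>x. _ * x"] mult.commute cong: if_cong)
  then show ?thesis
    by (simp add: vec_eq_iff column_def pabm_theta_def block_column_def sum_component)
qed

lemma pabm_theta_mult_in_span:
  "pabm_theta Lam c *v x \<in> span (range (case_prod (block_column Lam c)))"
proof -
  have "pabm_theta Lam c *v x = (\<Sum>j\<in>UNIV. x $ j *\<^sub>R column j (pabm_theta Lam c))"
    by (simp add: matrix_mult_sum scalar_mult_eq_scaleR)
  also have "\<dots> \<in> span (range (case_prod (block_column Lam c)))"
    unfolding column_pabm_theta
    by (intro span_sum span_scale) (auto intro: span_base)
  finally show ?thesis .
qed

lemma pabm_theta_eigenvector_in_span:
  assumes "pabm_theta Lam c *v x = d *\<^sub>R x" and "d \<noteq> 0"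
  shows "x \<in> span (range (case_prod (block_column Lam c)))"
proof -
  have "x = (1 / d) *\<^sub>R (pabm_theta Lam c *v x)"
    using assms by simp
  then show ?thesis
    by (metis pabm_theta_mult_in_span span_scale)
qed

lemma inner_block_column:
  "block_column Lam c k l \<bullet> block_column Lam c k' l' =
     (if k = k' then block_gram Lam c k $ l $ l' else 0)"
  by (auto simp: block_column_def block_gram_def inner_vec_def if_distrib[where f="\<lambda>x. _ * x"]
      sum.inter_filter[symmetric] cong: if_cong)

lemma block_gram_quadratic_form:
  "x \<bullet> (block_gram Lam c k *v x) = norm (\<Sum>l\<in>UNIV. x $ l *\<^sub>R block_column Lam c k l) ^ 2"
proof -
  have "norm (\<Sum>l\<in>UNIV. x $ l *\<^sub>R block_column Lam c k l) ^ 2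
      = (\<Sum>l\<in>UNIV. \<Sum>l'\<in>UNIV. x $ l * (block_gram Lam c k $ l $ l' * x $ l'))"
    by (simp add: power2_norm_eq_inner inner_sum_left inner_sum_right inner_block_column
        sum_distrib_left mult_ac block_gram_def)
  also have "\<dots> = x \<bullet> (block_gram Lam c k *v x)"
    by (simp add: inner_vec_def matrix_vector_mult_def sum_distrib_left)
  finally show ?thesis ..
qed

lemma block_gram_invertible:
  assumes "independent (range (block_column Lam c k))" and "inj (block_column Lam c k)"
  shows "invertible (block_gram Lam c k)"
proof -
  have "x = 0" if "block_gram Lam c k *v x = 0" for x
  proof -
    have "(\<Sum>l\<in>UNIV. x $ l *\<^sub>R block_column Lam c k l) = 0"
      using block_gram_quadratic_form[of x Lam c k] that by simp
    then show "x = 0"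
      using independent_range_coefficients_zero[OF assms] by (auto simp: vec_eq_iff)
  qed
  then show ?thesis
    by (simp add: invertible_left_inverse matrix_left_invertible_ker)
qed

lemma community_projection_in_span:
  "community_projection Lam c b \<in> span (range (case_prod (block_column Lam c)))"
  unfolding community_projection_def by (intro span_sum span_scale) (auto intro: span_base)

lemma community_projection_component:
  "community_projection Lam c b $ a =
     (if c a = c b then D_form (pabm_P Lam c (c b)) (Lam $ a) (Lam $ b) else 0)"
  by (simp add: community_projection_def block_column_def D_form_def inner_vec_def sum_component
      mult.commute if_distrib[where f="\<lambda>x. _ * x"] cong: if_cong)

lemma inner_block_column_axis_diff_community_projection:
  assumes "invertible (block_gram Lam c (c b))"
  shows "block_column Lam c k l \<bullet> (axis b 1 - community_projection Lam c b) = 0"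
proof -
  let ?y = "pabm_P Lam c (c b) *v Lam $ b"
  have "block_column Lam c k l \<bullet> community_projection Lam c b
      = (if c b = k then (block_gram Lam c (c b) *v ?y) $ l else 0)"
    by (auto simp: community_projection_def inner_sum_right inner_block_column
        matrix_vector_mult_def mult.commute)
  also have "\<dots> = block_column Lam c k l \<bullet> axis b 1"
    using matrix_inv_right[OF assms]
    by (auto simp: pabm_P_def matrix_vector_mul_assoc inner_axis block_column_def)
  finally show ?thesis
    by (simp add: inner_diff_right)
qed

theorem corollary1:
  fixes Lam :: "real^'k^'n" and c :: "'n \<Rightarrow> 'k"
    and Xi :: "real^'m^'n" and d :: "'m \<Rightarrow> real"
    and i j :: 'n
  assumes K2: "CARD('k) \<ge> 2"
    and Lam_range: "\<forall>i a. 0 \<le> Lam $ i $ a \<and> Lam $ i $ a \<le> 1"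
    and rank: "rank (pabm_theta Lam c) = CARD('k)^2"
    and m_card: "CARD('m) = CARD('k)^2"
    and orth: "transpose Xi ** Xi = mat 1"
    and eig: "\<forall>l. pabm_theta Lam c *v column l Xi = d l *\<^sub>R column l Xi \<and> d l \<noteq> 0"
    and nz: "Xi $ i \<noteq> 0" "Xi $ j \<noteq> 0"
  shows "\<bar>cos_sim (Xi $ i) (Xi $ j)\<bar> =
    (if c i = c j then
       \<bar>D_form (pabm_P Lam c (c i)) (Lam $ i) (Lam $ j) /
         (sqrt (D_form (pabm_P Lam c (c i)) (Lam $ i) (Lam $ i)) *
          sqrt (D_form (pabm_P Lam c (c i)) (Lam $ j) (Lam $ j)))\<bar>
     else 0)"
proof -
  let ?V = "range (case_prod (block_column Lam c))"
  let ?X = "range (\<lambda>l. column l Xi)"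
  have X_in_span: "?X \<subseteq> span ?V"
    using eig by (auto intro: pabm_theta_eigenvector_in_span)
  have "card ?V \<le> CARD('k \<times> 'k)"
    by (rule card_image_le) simp
  then have "card ?V \<le> card ?X"
    using m_card orthonormal_columns_independent(2)[OF orth] by (simp add: power2_eq_square)
  note spanning = spanning_set_independent_of_card_le[OF finite_imageI[OF finite]
      orthonormal_columns_independent(1)[OF orth] X_in_span this]
  have "card ?V = CARD('k \<times> 'k)"
    using spanning(3) m_card orthonormal_columns_independent(2)[OF orth] by (simp add: power2_eq_square)
  then have "inj (case_prod (block_column Lam c))"
    by (intro eq_card_imp_inj_on) simp_all
  moreover have "range (block_column Lam c k) \<subseteq> ?V" for k
    by auto
  ultimately have "invertible (block_gram Lam c k)" for k
    using independent_mono[OF spanning(1)] by (intro block_gram_invertible) (auto simp: inj_def)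
  then have row_inner: "Xi $ a \<bullet> Xi $ b = community_projection Lam c b $ a" for a b
    by (intro inner_rows_orthonormal_columns[OF orth spanning(2) community_projection_in_span])
      (auto intro: inner_block_column_axis_diff_community_projection)
  show ?thesis
    using row_inner[of i j] row_inner[of i i] row_inner[of j j]
    by (simp add: cos_sim_def norm_eq_sqrt_inner community_projection_component)
qed

end
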